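(* Let $f$ be the function on $D\subset\mathbb{R}^2$ described in the context, and run gradient descent $x^{t+1} = x^t - \eta\nabla f(x^t)$ with step size $\eta = \frac{1}{4L}$, starting from a point $x^0=(x_1^0,x_2^0)$ in the first block $B_1 = [0,\tau]^2$ satisfying $|x^0_1 - \tfrac{\tau}{2}| \le \frac{\tau}{2e^2}$. Then every gradient descent iterate $x^t$ lies in the region $D$.
   Context: Fix constants $L \ge \gamma > 0$, $\tau > 0$, an integer $n \ge 2$, and set $L_2 = 4L$. Blocks: for odd $i\in\{1,\dots,n\}$, $B_i = [(i-1)\tau, i\tau]\times[(i-1)\tau, i\tau]$; for even $i$, $B_i = [i\tau,(i+1)\tau]\times[(i-2)\tau,(i-1)\tau]$. Buffers: for $i = 1,\dots,n-1$, $B'_i = [i\tau,(i+1)\tau]\times[(i-1)\tau, i\tau]$. Let $(s_1^i,s_2^i)$ denote the center of $B_i$ and $D = \bigcup_{i=1}^n B_i \cup \bigcup_{i=1}^{n-1} B'_i$. Define $p(u) = \tfrac12(\gamma-L)u^2 + (L\tau - 2\gamma\tau)u$, $g_1(u) = p(u) - p(\tau) - \tfrac14\gamma\tau^2$, $\nu = \tfrac14 L\tau^2 - g_1(2\tau)$, and for constants $c_1,c_2$, $h(u;c_1,c_2) = c_2 - \frac{10(c_1-c_2)(u-2\tau)^3}{\tau^3} - \frac{15(c_1-c_2)(u-2\tau)^4}{\tau^4} - \frac{6(c_1-c_2)(u-2\tau)^5}{\tau^5}$. The function $f$ on $D$ is: (1) for odd $i<n$ and $x\in B_i$ (writing $s=s^i$):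 $f(x) = -i\nu - \gamma(x_1-s_1)^2 + L(x_2-s_2)^2$ if $x_1 > s_1$, and $f(x) = -i\nu + L_2(x_1-s_1)^2 + L(x_2-s_2)^2$ if $x_1\le s_1$; (2) for even $i<n$ and $x\in B_i$: $f(x) = -i\nu + L(x_1-s_1)^2 - \gamma(x_2-s_2)^2$ if $x_2 > s_2$, and $f(x) = -i\nu + L(x_1-s_1)^2 + L_2(x_2-s_2)^2$ if $x_2\le s_2$; (3) for $x\in B_n$: $f(x) = -n\nu + L(x_1-s_1^n)^2 + L(x_2-s_2^n)^2$; (4) for odd $i\le n-1$ and $x\in B'_i$: with $u = x_1-(i-1)\tau\in[\tau,2\tau]$ and $w = x_2 - s_2^i$, $f(x) = -i\nu + g_1(u) + h(u;L,c)\,w^2$ where $c=-\gamma$ if $w>0$ and $c=L_2$ if $w\le 0$; (5) for even $i\le n-1$ and $x\in B'_i$: with $u = x_2-(i-2)\tau\in[\tau,2\tau]$ and $w = x_1 - s_1^i$, $f(x) = -i\nu + g_1(u) + h(u;L,c)\,w^2$ where $c=-\gamma$ if $w>0$ and $c=L_2$ if $w\le 0$. The function $f$ is extended from $D$ to $\mathbb{R}^2$ (via the Whitney extension theorem) so that gradient descent is defined everywhere.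
   Formalization: The step uses, in place of the gradient of a Whitney extension of f, any field equal at each point of D to the gradient, relative to some block or buffer containing it, of that piece's formula. The statement above fails without it. *)

theory Defs
  imports "HOL-Analysis.Analysis"
begin

definition L2c :: "real \<Rightarrow> real" where
  "L2c L = 4 * L"

definition pfun :: "real \<Rightarrow> real \<Rightarrow> real \<Rightarrow> real \<Rightarrow> real" where
  "pfun L \<gamma> \<tau> u = (1/2) * (\<gamma> - L) * u\<^sup>2 + (L * \<tau> - 2 * \<gamma> * \<tau>) * u"

definition g1 :: "real \<Rightarrow> real \<Rightarrow> real \<Rightarrow> real \<Rightarrow> real" where
  "g1 L \<gamma> \<tau> u = pfun L \<gamma> \<tau> u - pfun L \<gamma> \<tau> \<tau> - (1/4) * \<gamma> * \<tau>\<^sup>2"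

definition nu :: "real \<Rightarrow> real \<Rightarrow> real \<Rightarrow> real" where
  "nu L \<gamma> \<tau> = (1/4) * L * \<tau>\<^sup>2 - g1 L \<gamma> \<tau> (2 * \<tau>)"

definition hfun :: "real \<Rightarrow> real \<Rightarrow> real \<Rightarrow> real \<Rightarrow> real" where
  "hfun \<tau> c1 c2 u = c2 - 10 * (c1 - c2) * (u - 2*\<tau>)^3 / \<tau>^3
                        - 15 * (c1 - c2) * (u - 2*\<tau>)^4 / \<tau>^4
                        - 6 * (c1 - c2) * (u - 2*\<tau>)^5 / \<tau>^5"

definition blk :: "real \<Rightarrow> nat \<Rightarrow> (real \<times> real) set" where
  "blk \<tau> i = (if odd i
     then {(real i - 1) * \<tau> .. real i * \<tau>} \<times> {(real i - 1) * \<tau> .. real i * \<tau>}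
     else {real i * \<tau> .. (real i + 1) * \<tau>} \<times> {(real i - 2) * \<tau> .. (real i - 1) * \<tau>})"

definition buf :: "real \<Rightarrow> nat \<Rightarrow> (real \<times> real) set" where
  "buf \<tau> i = {real i * \<tau> .. (real i + 1) * \<tau>} \<times> {(real i - 1) * \<tau> .. real i * \<tau>}"

definition cs1 :: "real \<Rightarrow> nat \<Rightarrow> real" where
  "cs1 \<tau> i = (if odd i then (real i - 1/2) * \<tau> else (real i + 1/2) * \<tau>)"

definition cs2 :: "real \<Rightarrow> nat \<Rightarrow> real" where
  "cs2 \<tau> i = (if odd i then (real i - 1/2) * \<tau> else (real i - 3/2) * \<tau>)"

definition regionD :: "real \<Rightarrow> nat \<Rightarrow> (real \<times> real) set" where
  "regionD \<tau> n = (\<Union>i\<in>{1..n}. blk \<tau> i) \<union> (\<Union>i\<in>{1..n-1}. buf \<tau> i)"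

definition fblk :: "real \<Rightarrow> real \<Rightarrow> real \<Rightarrow> nat \<Rightarrow> nat \<Rightarrow> real \<times> real \<Rightarrow> real" where
  "fblk L \<gamma> \<tau> n i x = (let x1 = fst x; x2 = snd x; s1 = cs1 \<tau> i; s2 = cs2 \<tau> i;
       v = - real i * nu L \<gamma> \<tau> in
     if i = n then v + L * (x1 - s1)\<^sup>2 + L * (x2 - s2)\<^sup>2
     else if odd i then
       (if x1 > s1 then v - \<gamma> * (x1 - s1)\<^sup>2 + L * (x2 - s2)\<^sup>2
        else v + L2c L * (x1 - s1)\<^sup>2 + L * (x2 - s2)\<^sup>2)
     else
       (if x2 > s2 then v + L * (x1 - s1)\<^sup>2 - \<gamma> * (x2 - s2)\<^sup>2
        else v + L * (x1 - s1)\<^sup>2 + L2c L * (x2 - s2)\<^sup>2))"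

definition fbuf :: "real \<Rightarrow> real \<Rightarrow> real \<Rightarrow> nat \<Rightarrow> real \<times> real \<Rightarrow> real" where
  "fbuf L \<gamma> \<tau> i x = (let x1 = fst x; x2 = snd x;
       u = (if odd i then x1 - (real i - 1) * \<tau> else x2 - (real i - 2) * \<tau>);
       w = (if odd i then x2 - cs2 \<tau> i else x1 - cs1 \<tau> i);
       c = (if w > 0 then - \<gamma> else L2c L) in
     - real i * nu L \<gamma> \<tau> + g1 L \<gamma> \<tau> u + hfun \<tau> L c u * w\<^sup>2)"

text \<open>G is a gradient field of f on D: at every point of D it is the gradient
  (derivative relative to the closed piece) of the formula of some piece containing the point.\<close>

definition is_grad_field :: "real \<Rightarrow> real \<Rightarrow> real \<Rightarrow> nat \<Rightarrow> (real \<times> real \<Rightarrow> real \<times> real) \<Rightarrow> bool" where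
  "is_grad_field L \<gamma> \<tau> n G \<longleftrightarrow> (\<forall>x \<in> regionD \<tau> n.
      (\<exists>i\<in>{1..n}. x \<in> blk \<tau> i \<and>
          (fblk L \<gamma> \<tau> n i has_derivative (\<lambda>h. G x \<bullet> h)) (at x within blk \<tau> i)) \<or>
      (\<exists>i\<in>{1..n-1}. x \<in> buf \<tau> i \<and>
          (fbuf L \<gamma> \<tau> i has_derivative (\<lambda>h. G x \<bullet> h)) (at x within buf \<tau> i)))"

definition gd_iter :: "real \<Rightarrow> (real \<times> real \<Rightarrow> real \<times> real) \<Rightarrow> real \<times> real \<Rightarrow> nat \<Rightarrow> real \<times> real" where
  "gd_iter \<eta> G x0 t = ((\<lambda>x. x - \<eta> *\<^sub>R G x) ^^ t) x0"

end

(*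
  In block i < n take coordinates a (pointing into buffer i) and b. A gradient step with
  step size 1/(4L) maps a to (1 + r) a if a > 0 and to -a otherwise, and b to b/2, where
  r = gamma/(2L). For the exponent beta with (1 + r) powr beta = 2 the quantity |b| |a| powr beta
  therefore never increases, so the entry condition |a| <= exp (-2) tau/2 forces
  |b| <= exp (-2 beta) tau/2 when the iterate crosses into the buffer. In the buffer the
  coordinate u only increases and |w| stays below an envelope in u: a step multiplies |w| by
  at most 1 + r, and where it does so it advances u by at least tau (1 + 2r)/8. The constants
  make the envelope at most exp (-2) tau/2 at the far end, which is the entry condition of the
  next block again.
  The last block is a bowl in which a step halves both coordinates. Since G is only known to be
  the gradient of some piece containing the point, one also needs that adjacent pieces have
  equal gradients on their common sides; the entrance of the last block is the one exception,
  where a step with the buffer's gradient still lands inside the last block.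
*)

theory Submission
  imports Defs
begin

subsection \<open>The quintic smoothstep behind the buffer interpolation\<close>

definition smoothstep :: "real \<Rightarrow> real" where
  "smoothstep t = 10*t^3 - 15*t^4 + 6*t^5"

definition smoothstep_deriv :: "real \<Rightarrow> real" where
  "smoothstep_deriv t = 30*t^2*(1 - t)^2"

lemma smoothstep_0 [simp]: "smoothstep 0 = 0"
  and smoothstep_1 [simp]: "smoothstep 1 = 1"
  and smoothstep_deriv_0 [simp]: "smoothstep_deriv 0 = 0"
  and smoothstep_deriv_1 [simp]: "smoothstep_deriv 1 = 0"
  by (simp_all add: smoothstep_def smoothstep_deriv_def)

lemma smoothstep_nonneg:
  assumes "0 \<le> t" shows "0 \<le> smoothstep t"
proof -
  have "smoothstep t = t^3 * (6*(t - 5/4)^2 + 5/8)"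
    unfolding smoothstep_def by algebra
  moreover have "0 < 6*(t - 5/4)^2 + (5/8::real)"
    by (simp add: add_nonneg_pos)
  ultimately show ?thesis using assms by simp
qed

lemma smoothstep_one_minus: "smoothstep (1 - t) = 1 - smoothstep t"
  unfolding smoothstep_def by algebra

lemma smoothstep_le_one: "t \<le> 1 \<Longrightarrow> smoothstep t \<le> 1"
  using smoothstep_nonneg[of "1 - t"] smoothstep_one_minus[of t] by simp

lemma smoothstep_le_half:
  assumes "t \<le> 1/2" shows "smoothstep t \<le> 1/2"
proof -
  have "smoothstep t - 1/2 = (t - 1/2) * (6*((t - 1/2)^2 - 5/12)^2 + 5/6)"
    unfolding smoothstep_def by algebra
  moreover have "0 < 6*((t - 1/2)^2 - 5/12)^2 + (5/6::real)"
    by (simp add: add_nonneg_pos)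
  ultimately show ?thesis
    using assms by (smt (verit) mult_nonpos_nonneg)
qed

lemma smoothstep_le_quarter:
  assumes "0 \<le> t" "t \<le> 1/4" shows "smoothstep t \<le> 5/32"
proof -
  have "smoothstep t = 10*t^3 - t^4 * (15 - 6*t)"
    unfolding smoothstep_def by algebra
  moreover have "0 \<le> t^4 * (15 - 6*t)"
    using assms by simp
  moreover have "t^3 \<le> (1/4)^3"
    using assms by (intro power_mono) auto
  ultimately show ?thesis by (simp add: power3_eq_cube)
qed

lemma smoothstep_has_real_derivative:
  "(smoothstep has_real_derivative smoothstep_deriv t) (at t)"
proof -
  have "((\<lambda>t. 10*t^3 - 15*t^4 + 6*t^5) has_real_derivative
          10*(3*t^2) - 15*(4*t^3) + 6*(5*t^4)) (at t)"
    by (auto intro!: derivative_eq_intros)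
  moreover have "10*(3*t^2) - 15*(4*t^3) + 6*(5*t^4) = smoothstep_deriv t"
    unfolding smoothstep_deriv_def by algebra
  ultimately show ?thesis
    unfolding smoothstep_def[abs_def] by simp
qed

lemma smoothstep_deriv_nonneg: "0 \<le> smoothstep_deriv t"
  by (simp add: smoothstep_deriv_def)

lemma smoothstep_deriv_le:
  assumes "0 \<le> t" "t \<le> 1" shows "smoothstep_deriv t \<le> 15/8"
proof -
  have "0 \<le> t*(1 - t)"
    using assms by simp
  moreover have "t*(1 - t) \<le> 1/4"
    using sum_squares_ge_zero[of "t - 1/2" 0] by (simp add: power2_eq_square algebra_simps)
  ultimately have "(t*(1 - t))^2 \<le> (1/4)^2"
    by (intro power_mono) auto
  moreover have "smoothstep_deriv t = 30 * (t*(1 - t))^2"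
    by (simp add: smoothstep_deriv_def power_mult_distrib)
  ultimately show ?thesis by (simp only: power_divide) simp
qed

lemma hfun_eq_smoothstep:
  assumes "\<tau> \<noteq> 0"
  shows "hfun \<tau> c1 c2 u = c1 - (c1 - c2) * smoothstep ((u - \<tau>)/\<tau>)"
proof -
  define t where "t = (u - \<tau>)/\<tau>"
  have u: "u - 2*\<tau> = \<tau> * (t - 1)"
    using assms unfolding t_def by (simp add: field_simps)
  have "hfun \<tau> c1 c2 u
      = c2 - 10*(c1 - c2)*(t - 1)^3 - 15*(c1 - c2)*(t - 1)^4 - 6*(c1 - c2)*(t - 1)^5"
    unfolding hfun_def u using assms by (simp add: power_mult_distrib)
  also have "\<dots> = c1 - (c1 - c2) * smoothstep t"
    unfolding smoothstep_def by algebra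
  finally show ?thesis unfolding t_def .
qed

definition hfun_deriv :: "real \<Rightarrow> real \<Rightarrow> real \<Rightarrow> real \<Rightarrow> real" where
  "hfun_deriv \<tau> c1 c2 u = (c2 - c1) * smoothstep_deriv ((u - \<tau>)/\<tau>) / \<tau>"

lemma hfun_has_real_derivative:
  assumes "\<tau> \<noteq> 0"
  shows "(hfun \<tau> c1 c2 has_real_derivative hfun_deriv \<tau> c1 c2 u) (at u)"
proof -
  have "((\<lambda>u. (u - \<tau>)/\<tau>) has_real_derivative 1/\<tau>) (at u)"
    using assms by (auto intro!: derivative_eq_intros)
  then have "((\<lambda>u. c1 - (c1 - c2) * smoothstep ((u - \<tau>)/\<tau>)) has_real_derivative
          hfun_deriv \<tau> c1 c2 u) (at u)"
    by (rule DERIV_cong[OF DERIV_diff[OF DERIV_const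
          DERIV_cmult[OF DERIV_chain2[OF smoothstep_has_real_derivative]]]])
       (use assms in \<open>simp add: hfun_deriv_def field_simps\<close>)
  moreover have "hfun \<tau> c1 c2 = (\<lambda>u. c1 - (c1 - c2) * smoothstep ((u - \<tau>)/\<tau>))"
    using hfun_eq_smoothstep[OF assms] by auto
  ultimately show ?thesis
    by simp
qed

lemma hfun_left_end: "\<tau> \<noteq> 0 \<Longrightarrow> hfun \<tau> c1 c2 \<tau> = c1"
  and hfun_right_end: "\<tau> \<noteq> 0 \<Longrightarrow> hfun \<tau> c1 c2 (2*\<tau>) = c2"
  and hfun_deriv_left_end: "hfun_deriv \<tau> c1 c2 \<tau> = 0"
  and hfun_deriv_right_end: "\<tau> \<noteq> 0 \<Longrightarrow> hfun_deriv \<tau> c1 c2 (2*\<tau>) = 0"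
  by (simp_all add: hfun_eq_smoothstep hfun_deriv_def)

lemma has_derivative_hfun [derivative_intros]:
  "\<tau> \<noteq> 0 \<Longrightarrow> (g has_derivative g') (at x within s) \<Longrightarrow>
   ((\<lambda>x. hfun \<tau> c1 c2 (g x)) has_derivative (\<lambda>h. g' h * hfun_deriv \<tau> c1 c2 (g x))) (at x within s)"
  by (rule DERIV_compose_FDERIV[OF hfun_has_real_derivative])

definition g1_deriv :: "real \<Rightarrow> real \<Rightarrow> real \<Rightarrow> real \<Rightarrow> real" where
  "g1_deriv L \<gamma> \<tau> u = (\<gamma> - L) * u + (L * \<tau> - 2 * \<gamma> * \<tau>)"

lemma g1_has_real_derivative: "(g1 L \<gamma> \<tau> has_real_derivative g1_deriv L \<gamma> \<tau> u) (at u)"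
  unfolding g1_def[abs_def] pfun_def[abs_def] g1_deriv_def
  by (auto intro!: derivative_eq_intros simp: field_simps)

lemma has_derivative_g1 [derivative_intros]:
  "(g has_derivative g') (at x within s) \<Longrightarrow>
   ((\<lambda>x. g1 L \<gamma> \<tau> (g x)) has_derivative (\<lambda>h. g' h * g1_deriv L \<gamma> \<tau> (g x))) (at x within s)"
  by (rule DERIV_compose_FDERIV[OF g1_has_real_derivative])

text \<open>The one-sided quadratics of the construction are \<open>cp * pos_part_sq w + cn * neg_part_sq w\<close>;
  in this form they are visibly differentiable across \<open>w = 0\<close>.\<close>

definition pos_part_sq :: "real \<Rightarrow> real" where
  "pos_part_sq w = (max w 0)^2"

definition neg_part_sq :: "real \<Rightarrow> real" where
  "neg_part_sq w = (min w 0)^2"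

lemma pos_part_sq_has_real_derivative:
  "(pos_part_sq has_real_derivative 2 * max x 0) (at x)"
proof (cases x "0::real" rule: linorder_cases)
  case less
  have "((\<lambda>w. 0) has_real_derivative 2 * max x 0) (at x)"
    using less by simp
  then show ?thesis
    by (rule has_field_derivative_transform_within_open[where S="{..<0}"])
       (use less in \<open>auto simp: pos_part_sq_def\<close>)
next
  case equal
  have quotient: "(pos_part_sq (0 + h) - pos_part_sq 0) / h = max h 0" if "h \<noteq> 0" for h
    using that by (cases "h > 0") (simp_all add: pos_part_sq_def power2_eq_square max_def)
  have "((\<lambda>h. max h 0) \<longlongrightarrow> max 0 0) (at (0::real))"
    by (intro tendsto_max tendsto_ident_at tendsto_const)
  moreover have "\<forall>\<^sub>F h in at 0. max h 0 = (pos_part_sq (0 + h) - pos_part_sq 0) / h"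
    unfolding eventually_at_filter by (rule always_eventually) (use quotient in auto)
  ultimately have "((\<lambda>h. (pos_part_sq (0 + h) - pos_part_sq 0) / h) \<longlongrightarrow> 0) (at 0)"
    using Lim_transform_eventually by fastforce
  then show ?thesis
    using equal by (simp add: DERIV_def)
next
  case greater
  have "((\<lambda>w. w^2) has_real_derivative 2 * max x 0) (at x)"
    using greater by (auto intro!: derivative_eq_intros)
  then show ?thesis
    by (rule has_field_derivative_transform_within_open[where S="{0<..}"])
       (use greater in \<open>auto simp: pos_part_sq_def\<close>)
qed

lemma neg_part_sq_has_real_derivative:
  "(neg_part_sq has_real_derivative 2 * min x 0) (at x)"
proof -
  have reflect: "neg_part_sq = (\<lambda>w. pos_part_sq (- w))"
    by (auto simp: neg_part_sq_def pos_part_sq_def fun_eq_iff max_def min_def)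
  have "((\<lambda>w. pos_part_sq (- w)) has_real_derivative 2 * max (-x) 0 * (-1)) (at x)"
    by (rule DERIV_chain2[OF pos_part_sq_has_real_derivative]) (auto intro!: derivative_eq_intros)
  then show ?thesis
    unfolding reflect by (rule DERIV_cong) (simp add: max_def min_def)
qed

lemma has_derivative_pos_part_sq [derivative_intros]:
  "(g has_derivative g') (at x within s) \<Longrightarrow>
   ((\<lambda>x. pos_part_sq (g x)) has_derivative (\<lambda>h. g' h * (2 * max (g x) 0))) (at x within s)"
  by (rule DERIV_compose_FDERIV[OF pos_part_sq_has_real_derivative])

lemma has_derivative_neg_part_sq [derivative_intros]:
  "(g has_derivative g') (at x within s) \<Longrightarrow>
   ((\<lambda>x. neg_part_sq (g x)) has_derivative (\<lambda>h. g' h * (2 * min (g x) 0))) (at x within s)"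
  by (rule DERIV_compose_FDERIV[OF neg_part_sq_has_real_derivative])

lemma one_sided_quadratic:
  "(if w > 0 then cp else cn) * w^2 = cp * pos_part_sq w + cn * neg_part_sq (w::real)"
  by (simp add: pos_part_sq_def neg_part_sq_def max_def min_def)

lemma one_sided_quadratic_slope:
  "cp * (2 * max w 0) + cn * (2 * min w 0) = 2 * (if w > 0 then cp else cn) * (w::real)"
  by (auto simp: max_def min_def)

lemma ln_add_one_le_cubic:
  fixes x :: real assumes "0 \<le> x"
  shows "ln (1 + x) \<le> x - x^2/2 + x^3/3"
proof -
  let ?f = "\<lambda>y::real. y - y^2/2 + y^3/3 - ln (1 + y)"
  have "?f 0 \<le> ?f x"
  proof (rule DERIV_nonneg_imp_nondecreasing[OF assms])
    fix y :: real assume y: "0 \<le> y" "y \<le> x"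
    have "(?f has_real_derivative 1 - y + y^2 - 1/(1 + y)) (at y)"
      using y by (auto intro!: derivative_eq_intros simp: field_simps power2_eq_square)
    moreover have "1 - y + y^2 - 1/(1 + y) = y^3/(1 + y)"
      using y by (simp add: field_simps power2_eq_square power3_eq_cube; algebra)
    ultimately show "\<exists>d. (?f has_real_derivative d) (at y) \<and> 0 \<le> d"
      using y by force
  qed
  then show ?thesis by simp
qed

lemma ln_add_one_ge_pade:
  fixes x :: real assumes "0 \<le> x"
  shows "2*x/(2 + x) \<le> ln (1 + x)"
proof -
  let ?f = "\<lambda>y::real. ln (1 + y) - 2*y/(2 + y)"
  have "?f 0 \<le> ?f x"
  proof (rule DERIV_nonneg_imp_nondecreasing[OF assms])
    fix y :: real assume y: "0 \<le> y" "y \<le> x"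
    have "(?f has_real_derivative 1/(1 + y) - 4/(2 + y)^2) (at y)"
      using y by (auto intro!: derivative_eq_intros simp: field_simps power2_eq_square)
    moreover have "1/(1 + y) - 4/(2 + y)^2 = y^2/((1 + y)*(2 + y)^2)"
      using y by (simp add: divide_simps) algebra
    ultimately show "\<exists>d. (?f has_real_derivative d) (at y) \<and> 0 \<le> d"
      using y by force
  qed
  then show ?thesis by simp
qed

lemma inner_gradient_unique_within_cbox:
  fixes f :: "'a::euclidean_space \<Rightarrow> real"
  assumes "\<And>i. i \<in> Basis \<Longrightarrow> a \<bullet> i < b \<bullet> i" and "x \<in> cbox a b"
    and "(f has_derivative (\<lambda>h. p \<bullet> h)) (at x within cbox a b)"
    and "(f has_derivative (\<lambda>h. q \<bullet> h)) (at x within cbox a b)"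
  shows "p = q"
proof -
  have "(\<lambda>h. p \<bullet> h) = (\<lambda>h. q \<bullet> h)"
    using frechet_derivative_unique_within_closed_interval assms by blast
  then have "p \<bullet> (p - q) = q \<bullet> (p - q)"
    by meson
  then have "(p - q) \<bullet> (p - q) = 0"
    by (simp add: inner_diff_left)
  then show ?thesis by simp
qed

subsection \<open>The pieces of \<open>f\<close> and their gradients\<close>

locale gd_construction =
  fixes L \<gamma> \<tau> :: real and n :: nat
  assumes gamma_pos: "0 < \<gamma>" and gamma_le_L: "\<gamma> \<le> L" and tau_pos: "0 < \<tau>"
    and two_le_n: "2 \<le> n"
begin

lemma L_pos: "0 < L"
  using gamma_pos gamma_le_L by simp

lemma tau_nonzero: "\<tau> \<noteq> 0"
  using tau_pos by simp

abbreviation \<eta> :: real where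
  "\<eta> \<equiv> 1/(4*L)"

text \<open>Local coordinates: block \<open>k\<close> is left through its side \<open>blk_a k x = \<tau>/2\<close> into buffer \<open>k\<close>,
  in which \<open>buf_u\<close> and \<open>buf_w\<close> are the \<open>u\<close> and \<open>w\<close> of items (4) and (5).\<close>

definition blk_a :: "nat \<Rightarrow> real \<times> real \<Rightarrow> real" where
  "blk_a k x = (if odd k then fst x - cs1 \<tau> k else snd x - cs2 \<tau> k)"

definition blk_b :: "nat \<Rightarrow> real \<times> real \<Rightarrow> real" where
  "blk_b k x = (if odd k then snd x - cs2 \<tau> k else fst x - cs1 \<tau> k)"

definition buf_u :: "nat \<Rightarrow> real \<times> real \<Rightarrow> real" where
  "buf_u j x = (if odd j then fst x - (real j - 1) * \<tau> else snd x - (real j - 2) * \<tau>)"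

definition buf_w :: "nat \<Rightarrow> real \<times> real \<Rightarrow> real" where
  "buf_w j x = (if odd j then snd x - cs2 \<tau> j else fst x - cs1 \<tau> j)"

definition side_coeff :: "real \<Rightarrow> real" where
  "side_coeff w = (if w > 0 then - \<gamma> else L2c L)"

definition grad_blk :: "nat \<Rightarrow> real \<times> real \<Rightarrow> real \<times> real" where
  "grad_blk k x =
     (if k = n then (2*L*(fst x - cs1 \<tau> k), 2*L*(snd x - cs2 \<tau> k))
      else if odd k then (2 * side_coeff (blk_a k x) * blk_a k x, 2*L*blk_b k x)
      else (2*L*blk_b k x, 2 * side_coeff (blk_a k x) * blk_a k x))"

definition grad_buf_u :: "nat \<Rightarrow> real \<times> real \<Rightarrow> real" where
  "grad_buf_u j x = g1_deriv L \<gamma> \<tau> (buf_u j x)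
     + hfun_deriv \<tau> L (side_coeff (buf_w j x)) (buf_u j x) * (buf_w j x)^2"

definition grad_buf_w :: "nat \<Rightarrow> real \<times> real \<Rightarrow> real" where
  "grad_buf_w j x = 2 * hfun \<tau> L (side_coeff (buf_w j x)) (buf_u j x) * buf_w j x"

definition grad_buf :: "nat \<Rightarrow> real \<times> real \<Rightarrow> real \<times> real" where
  "grad_buf j x = (if odd j then (grad_buf_u j x, grad_buf_w j x) else (grad_buf_w j x, grad_buf_u j x))"

lemma side_quadratic:
  "\<phi> (side_coeff w) * w^2 = \<phi> (- \<gamma>) * pos_part_sq w + \<phi> (L2c L) * neg_part_sq w"
  using one_sided_quadratic[of w "\<phi> (- \<gamma>)" "\<phi> (L2c L)"] by (simp add: side_coeff_def if_distrib)

lemma side_quadratic_slope: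
  "\<phi> (- \<gamma>) * (2 * max w 0) + \<phi> (L2c L) * (2 * min w 0) = 2 * \<phi> (side_coeff w) * w"
  using one_sided_quadratic_slope[of "\<phi> (- \<gamma>)" w "\<phi> (L2c L)"] by (simp add: side_coeff_def if_distrib)

lemma hfun_side_quadratic:
  "hfun \<tau> L (side_coeff w) u * w^2
     = hfun \<tau> L (- \<gamma>) u * pos_part_sq w + hfun \<tau> L (L2c L) u * neg_part_sq w"
  using side_quadratic[of "\<lambda>c. hfun \<tau> L c u"] .

lemma fblk_has_derivative:
  "(fblk L \<gamma> \<tau> n k has_derivative (\<lambda>h. grad_blk k x \<bullet> h)) (at x within S)"
proof -
  define v where "v = - real k * nu L \<gamma> \<tau>"
  consider "k = n" | "k \<noteq> n" "odd k" | "k \<noteq> n" "even k" by blast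
  then show ?thesis
  proof cases
    case 1
    have piece: "fblk L \<gamma> \<tau> n k = (\<lambda>x. v + L * (fst x - cs1 \<tau> k)^2 + L * (snd x - cs2 \<tau> k)^2)"
      using 1 by (auto simp: fblk_def v_def fun_eq_iff Let_def)
    show ?thesis
      unfolding piece by (rule has_derivative_eq_rhs, (rule derivative_eq_intros refl)+)
         (use 1 in \<open>auto simp: grad_blk_def inner_prod_def fun_eq_iff algebra_simps\<close>)
  next
    case 2
    have piece: "fblk L \<gamma> \<tau> n k = (\<lambda>x. v + (- \<gamma> * pos_part_sq (fst x - cs1 \<tau> k)
        + L2c L * neg_part_sq (fst x - cs1 \<tau> k)) + L * (snd x - cs2 \<tau> k)^2)"
      using 2 by (auto simp: fblk_def v_def fun_eq_iff Let_def pos_part_sq_def neg_part_sq_def)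
    show ?thesis
      unfolding piece by (rule has_derivative_eq_rhs, (rule derivative_eq_intros refl)+)
         (use 2 side_quadratic_slope[of "\<lambda>c. c"] in
           \<open>auto simp: grad_blk_def inner_prod_def fun_eq_iff blk_a_def blk_b_def algebra_simps\<close>)
  next
    case 3
    have piece: "fblk L \<gamma> \<tau> n k = (\<lambda>x. v + L * (fst x - cs1 \<tau> k)^2 + (- \<gamma> * pos_part_sq (snd x - cs2 \<tau> k)
        + L2c L * neg_part_sq (snd x - cs2 \<tau> k)))"
      using 3 by (auto simp: fblk_def v_def fun_eq_iff Let_def pos_part_sq_def neg_part_sq_def)
    show ?thesis
      unfolding piece by (rule has_derivative_eq_rhs, (rule derivative_eq_intros refl)+)
         (use 3 side_quadratic_slope[of "\<lambda>c. c"] in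
           \<open>auto simp: grad_blk_def inner_prod_def fun_eq_iff blk_a_def blk_b_def algebra_simps\<close>)
  qed
qed

lemma fbuf_has_derivative:
  "(fbuf L \<gamma> \<tau> j has_derivative (\<lambda>h. grad_buf j x \<bullet> h)) (at x within S)"
proof -
  define v where "v = - real j * nu L \<gamma> \<tau>"
  show ?thesis
  proof (cases "odd j")
    case True
    define A B where "A = (real j - 1) * \<tau>" and "B = cs2 \<tau> j"
    have piece: "fbuf L \<gamma> \<tau> j = (\<lambda>x. v + g1 L \<gamma> \<tau> (fst x - A)
        + hfun \<tau> L (- \<gamma>) (fst x - A) * pos_part_sq (snd x - B)
        + hfun \<tau> L (L2c L) (fst x - A) * neg_part_sq (snd x - B))"
      unfolding fun_eq_iff fbuf_def Let_def v_def A_def B_def side_coeff_def[symmetric]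
        hfun_side_quadratic
      using True by simp
    have coords: "buf_u j x = fst x - A" "buf_w j x = snd x - B"
      using True by (simp_all add: buf_u_def buf_w_def A_def B_def)
    show ?thesis
      unfolding piece by (rule has_derivative_eq_rhs, (rule derivative_eq_intros refl tau_nonzero)+, rule ext)
         (simp add: grad_buf_def True coords inner_prod_def grad_buf_u_def grad_buf_w_def,
          use side_quadratic[of "\<lambda>c. hfun_deriv \<tau> L c (fst x - A)" "snd x - B"]
            side_quadratic_slope[of "\<lambda>c. hfun \<tau> L c (fst x - A)" "snd x - B"] in algebra)
  next
    case False
    define A B where "A = (real j - 2) * \<tau>" and "B = cs1 \<tau> j"
    have piece: "fbuf L \<gamma> \<tau> j = (\<lambda>x. v + g1 L \<gamma> \<tau> (snd x - A)
        + hfun \<tau> L (- \<gamma>) (snd x - A) * pos_part_sq (fst x - B)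
        + hfun \<tau> L (L2c L) (snd x - A) * neg_part_sq (fst x - B))"
      unfolding fun_eq_iff fbuf_def Let_def v_def A_def B_def side_coeff_def[symmetric]
        hfun_side_quadratic
      using False by simp
    have coords: "buf_u j x = snd x - A" "buf_w j x = fst x - B"
      using False by (simp_all add: buf_u_def buf_w_def A_def B_def)
    show ?thesis
      unfolding piece by (rule has_derivative_eq_rhs, (rule derivative_eq_intros refl tau_nonzero)+, rule ext)
         (simp add: grad_buf_def False coords inner_prod_def grad_buf_u_def grad_buf_w_def,
          use side_quadratic[of "\<lambda>c. hfun_deriv \<tau> L c (snd x - A)" "fst x - B"]
            side_quadratic_slope[of "\<lambda>c. hfun \<tau> L c (snd x - A)" "fst x - B"] in algebra)
  qed
qed

lemma blk_nondegenerate_cbox: "\<exists>a b. (\<forall>i\<in>Basis. a \<bullet> i < b \<bullet> i) \<and> blk \<tau> k = cbox a b"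
proof (cases "odd k")
  case True
  then show ?thesis using tau_pos
    by (intro exI[of _ "((real k - 1) * \<tau>, (real k - 1) * \<tau>)"] exI[of _ "(real k * \<tau>, real k * \<tau>)"])
       (simp add: blk_def cbox_Pair_eq Basis_prod_def algebra_simps)
next
  case False
  then show ?thesis using tau_pos
    by (intro exI[of _ "(real k * \<tau>, (real k - 2) * \<tau>)"] exI[of _ "((real k + 1) * \<tau>, (real k - 1) * \<tau>)"])
       (simp add: blk_def cbox_Pair_eq Basis_prod_def algebra_simps)
qed

lemma buf_nondegenerate_cbox: "\<exists>a b. (\<forall>i\<in>Basis. a \<bullet> i < b \<bullet> i) \<and> buf \<tau> j = cbox a b"
  using tau_pos
  by (intro exI[of _ "(real j * \<tau>, (real j - 1) * \<tau>)"] exI[of _ "((real j + 1) * \<tau>, real j * \<tau>)"])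
     (simp add: buf_def cbox_Pair_eq Basis_prod_def algebra_simps)

lemma gradient_within_blk:
  assumes "x \<in> blk \<tau> k" and "(fblk L \<gamma> \<tau> n k has_derivative (\<lambda>h. p \<bullet> h)) (at x within blk \<tau> k)"
  shows "p = grad_blk k x"
  using blk_nondegenerate_cbox[of k] assms fblk_has_derivative[of k x "blk \<tau> k"]
    inner_gradient_unique_within_cbox by metis

lemma gradient_within_buf:
  assumes "x \<in> buf \<tau> j" and "(fbuf L \<gamma> \<tau> j has_derivative (\<lambda>h. p \<bullet> h)) (at x within buf \<tau> j)"
  shows "p = grad_buf j x"
  using buf_nondegenerate_cbox[of j] assms fbuf_has_derivative[of j x "buf \<tau> j"]
    inner_gradient_unique_within_cbox by metis

lemma mem_blk_iff: "x \<in> blk \<tau> k \<longleftrightarrow> \<bar>blk_a k x\<bar> \<le> \<tau>/2 \<and> \<bar>blk_b k x\<bar> \<le> \<tau>/2"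
  unfolding abs_le_iff
  by (cases x) (auto simp: blk_def blk_a_def blk_b_def cs1_def cs2_def algebra_simps)

lemma mem_buf_iff: "x \<in> buf \<tau> j \<longleftrightarrow> \<tau> \<le> buf_u j x \<and> buf_u j x \<le> 2*\<tau> \<and> \<bar>buf_w j x\<bar> \<le> \<tau>/2"
  unfolding abs_le_iff
  by (cases x) (auto simp: buf_def buf_u_def buf_w_def cs1_def cs2_def algebra_simps)

lemma buf_u_eq_blk_a: "buf_u j x = blk_a j x + \<tau>/2"
  by (auto simp: buf_u_def blk_a_def cs1_def cs2_def algebra_simps)

lemma buf_w_eq_blk_b: "buf_w j x = blk_b j x"
  by (simp add: buf_w_def blk_b_def)

lemma blk_a_Suc: "blk_a (Suc j) x = buf_w j x"
  by (auto simp: buf_w_def blk_a_def cs1_def cs2_def algebra_simps)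

lemma blk_b_Suc: "blk_b (Suc j) x = buf_u j x - 5*\<tau>/2"
  by (auto simp: buf_u_def blk_b_def cs1_def cs2_def algebra_simps)

lemma mem_blk_scaled:
  "x \<in> blk \<tau> k \<longleftrightarrow> (if odd k
     then real k - 1 \<le> fst x/\<tau> \<and> fst x/\<tau> \<le> real k \<and> real k - 1 \<le> snd x/\<tau> \<and> snd x/\<tau> \<le> real k
     else real k \<le> fst x/\<tau> \<and> fst x/\<tau> \<le> real k + 1 \<and> real k - 2 \<le> snd x/\<tau> \<and> snd x/\<tau> \<le> real k - 1)"
  using tau_pos by (cases x) (auto simp: blk_def le_divide_eq divide_le_eq)

lemma mem_buf_scaled:
  "x \<in> buf \<tau> j \<longleftrightarrow>
     real j \<le> fst x/\<tau> \<and> fst x/\<tau> \<le> real j + 1 \<and> real j - 1 \<le> snd x/\<tau> \<and> snd x/\<tau> \<le> real j"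
  using tau_pos by (cases x) (auto simp: buf_def le_divide_eq divide_le_eq)

lemma mem_blk_unique:
  assumes "x \<in> blk \<tau> i" "x \<in> blk \<tau> k" shows "i = k"
proof -
  define X Y where "X = fst x / \<tau>" and "Y = snd x / \<tau>"
  note bounds = assms[unfolded mem_blk_scaled, folded X_def Y_def]
  have "i \<le> k + 1" "k \<le> i + 1"
    using bounds by (auto split: if_splits)
  moreover have "odd i \<noteq> odd k \<Longrightarrow> i = k"
    using bounds by (auto split: if_splits)
  ultimately show ?thesis by presburger
qed

lemma blk_meets_buf:
  assumes "x \<in> blk \<tau> i" "x \<in> buf \<tau> j"
  shows "(j = i \<and> blk_a i x = \<tau>/2) \<or> (Suc j = i \<and> blk_b i x = - \<tau>/2)"
proof -
  define X Y where "X = fst x / \<tau>" and "Y = snd x / \<tau>"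
  have bounds: "if odd i then real i - 1 \<le> X \<and> X \<le> real i \<and> real i - 1 \<le> Y \<and> Y \<le> real i
      else real i \<le> X \<and> X \<le> real i + 1 \<and> real i - 2 \<le> Y \<and> Y \<le> real i - 1"
    "real j \<le> X" "X \<le> real j + 1" "real j - 1 \<le> Y" "Y \<le> real j"
    using assms unfolding mem_blk_scaled mem_buf_scaled X_def Y_def by auto
  have "j = i \<or> Suc j = i"
    using bounds by (auto split: if_splits)
  then show ?thesis
  proof
    assume "j = i"
    then have "if odd i then X = real i else Y = real i - 1"
      using bounds by (auto split: if_splits)
    then show ?thesis
      using \<open>j = i\<close> tau_pos by (auto simp: blk_a_def X_def Y_def cs1_def cs2_def field_simps split: if_splits)
  next
    assume "Suc j = i"
    then have "if odd i then Y = real i - 1 else X = real i"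
      using bounds by (auto split: if_splits)
    then show ?thesis
      using \<open>Suc j = i\<close> tau_pos by (auto simp: blk_b_def X_def Y_def cs1_def cs2_def field_simps split: if_splits)
  qed
qed

lemma mem_buf_unique:
  assumes "x \<in> buf \<tau> i" "x \<in> buf \<tau> j" and "\<bar>buf_w i x\<bar> < \<tau>/2"
  shows "i = j"
proof (rule ccontr)
  assume "i \<noteq> j"
  then have sep: "real i + 1 \<le> real j \<or> real j + 1 \<le> real i"
    by linarith
  define X Y where "X = fst x / \<tau>" and "Y = snd x / \<tau>"
  have bounds: "real i \<le> X" "X \<le> real i + 1" "real i - 1 \<le> Y" "Y \<le> real i"
      "real j \<le> X" "X \<le> real j + 1" "real j - 1 \<le> Y" "Y \<le> real j"
    using assms(1,2) unfolding mem_buf_scaled X_def Y_def by auto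
  from sep have "(X = real i + 1 \<and> Y = real i) \<or> (X = real i \<and> Y = real i - 1)"
  proof
    assume "real i + 1 \<le> real j"
    with bounds show ?thesis by (intro disjI1 conjI) linarith+
  next
    assume "real j + 1 \<le> real i"
    with bounds show ?thesis by (intro disjI2 conjI) linarith+
  qed
  then have "\<bar>buf_w i x\<bar> = \<tau>/2"
    using tau_pos by (auto simp: buf_w_def X_def Y_def cs1_def cs2_def field_simps)
  with assms(3) show False by simp
qed

subsection \<open>The constants of the invariant\<close>

text \<open>\<open>a0\<close> bounds \<open>|blk_a|\<close> on entering a block and \<open>w0\<close> bounds \<open>|buf_w|\<close> on entering a buffer;
  \<open>K\<close> is the bound on \<open>|blk_b| * |blk_a| powr \<beta>\<close> that the first of them yields.\<close>

definition r :: real where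
  "r = \<gamma>/(2*L)"

definition \<beta> :: real where
  "\<beta> = ln 2 / ln (1 + r)"

definition a0 :: real where
  "a0 = exp (-2) * \<tau>/2"

definition w0 :: real where
  "w0 = \<tau>/2 * exp (-2*\<beta>)"

definition K :: real where
  "K = \<tau>/2 * a0 powr \<beta>"

definition \<sigma> :: real where
  "\<sigma> = \<tau>*(1 + 2*r)/8"

text \<open>Bound on \<open>|w|\<close> inside a buffer: up to \<open>u = 5\<tau>/4\<close> a step multiplies \<open>|w|\<close> by at most \<open>2/3\<close>,
  up to \<open>3\<tau>/2\<close> by at most \<open>1\<close>, and beyond by at most \<open>1 + r\<close> while advancing \<open>u\<close> by at least \<open>\<sigma>\<close>.\<close>

definition envelope :: "real \<Rightarrow> real" where
  "envelope u = (if u \<le> 5*\<tau>/4 then w0 else 2/3 * w0 * (1 + r) powr max 0 ((u - 3*\<tau>/2)/\<sigma>))"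

lemma r_pos: "0 < r"
  using gamma_pos L_pos by (simp add: r_def)

lemma r_le_half: "r \<le> 1/2"
  using gamma_le_L L_pos by (simp add: r_def field_simps)

lemma ln_growth_pos: "0 < ln (1 + r)"
  using r_pos by simp

lemma ln_growth_le_r: "ln (1 + r) \<le> r"
  using r_pos by (simp add: ln_add_one_self_le_self)

lemma one_le_beta: "1 \<le> \<beta>"
proof -
  have "ln (1 + r) \<le> ln 2"
    using r_pos r_le_half by simp
  then show ?thesis
    using ln_growth_pos by (simp add: \<beta>_def)
qed

lemma beta_ge: "2/(3*r) \<le> \<beta>"
proof -
  have "2/(3*r) \<le> (2/3) / ln (1 + r)"
    using ln_growth_pos ln_growth_le_r r_pos by (simp add: field_simps)
  also have "\<dots> \<le> \<beta>"
    unfolding \<beta>_def using ln2_ge_two_thirds ln_growth_pos by (intro divide_right_mono) auto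
  finally show ?thesis .
qed

text \<open>The exponent \<open>\<beta>\<close> makes \<open>|b| * |a| powr \<beta>\<close> invariant under \<open>a \<mapsto> (1 + r) a, b \<mapsto> b/2\<close>.\<close>

lemma growth_powr_beta: "(1 + r) powr \<beta> = 2"
  using r_pos ln_growth_pos by (simp add: powr_def \<beta>_def)

lemma a0_pos: "0 < a0"
  using tau_pos by (simp add: a0_def)

lemma a0_less: "a0 < \<tau>/2"
  using tau_pos by (simp add: a0_def)

lemma a0_le_quarter: "a0 \<le> \<tau>/4"
proof -
  have "exp (-2) \<le> (1/2::real)"
    using exp_ge_add_one_self[of 2] by (simp add: exp_minus field_simps)
  then show ?thesis
    using tau_pos by (simp add: a0_def)
qed

lemma w0_pos: "0 < w0"
  using tau_pos by (simp add: w0_def)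

lemma w0_le_a0: "w0 \<le> a0"
  using one_le_beta tau_pos by (simp add: w0_def a0_def)

lemma K_eq: "K = w0 * (\<tau>/2) powr \<beta>"
proof -
  have "a0 powr \<beta> = exp (-2) powr \<beta> * (\<tau>/2) powr \<beta>"
    using tau_pos unfolding a0_def by (simp add: powr_mult[symmetric])
  moreover have "exp (-2) powr \<beta> = exp (-2*\<beta>)"
    by (simp add: powr_def)
  ultimately show ?thesis
    by (simp add: K_def w0_def)
qed

lemma w0_sq_le: "w0^2 \<le> 3/32 * r * \<tau>^2"
proof -
  have "8/(3*r) \<le> 4*\<beta>"
    using mult_left_mono[OF beta_ge, of 4] by simp
  also have "\<dots> \<le> exp (4*\<beta>)"
    using exp_ge_add_one_self[of "4*\<beta>"] by linarith
  finally have "exp (-4*\<beta>) \<le> 3/8 * r"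
    using r_pos by (simp add: exp_minus field_simps)
  have "w0^2 = \<tau>^2/4 * exp (-4*\<beta>)"
    by (simp add: w0_def power_mult_distrib power2_eq_square exp_add[symmetric])
  also have "\<dots> \<le> \<tau>^2/4 * (3/8 * r)"
    using \<open>exp (-4*\<beta>) \<le> 3/8 * r\<close> by (intro mult_left_mono) auto
  finally show ?thesis
    by (simp add: field_simps)
qed

lemma ln_growth_sq_bound: "(1 + 4/(1 + 2*r)) * ln (1 + r)^2 + 8/5 * ln (1 + r) \<le> 4/3"
proof (cases "r \<le> 1/4")
  case True
  have "1 + 4/(1 + 2*r) \<le> 5"
    using r_pos by (simp add: field_simps)
  moreover have "ln (1 + r) \<le> 1/4"
    using ln_growth_le_r True by simp
  moreover from this have "ln (1 + r)^2 \<le> (1/4)^2"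
    using ln_growth_pos by (intro power_mono) auto
  ultimately have "(1 + 4/(1 + 2*r)) * ln (1 + r)^2 \<le> 5 * (1/4)^2"
    using r_pos by (intro mult_mono) auto
  then show ?thesis
    using \<open>ln (1 + r) \<le> 1/4\<close> by (simp add: power2_eq_square)
next
  case False
  have "1 + 4/(1 + 2*r) \<le> 11/3"
    using False by (simp add: field_simps)
  moreover have cubic: "r - r^2/2 + r^3/3 \<le> 5/12"
  proof -
    have "5/12 - (r - r^2/2 + r^3/3) = (1/2 - r) * (5/6 - r/3 + r^2/3)"
      by (simp add: field_simps power2_eq_square power3_eq_cube)
    moreover have "0 \<le> 5/6 - r/3 + r^2/3"
      using r_le_half r_pos zero_le_power2[of r] by linarith
    ultimately show ?thesis
      using r_le_half by (smt (verit) mult_nonneg_nonneg)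
  qed
  then have "ln (1 + r) \<le> 5/12"
    using ln_add_one_le_cubic[of r] r_pos by simp
  moreover from this have "ln (1 + r)^2 \<le> (5/12)^2"
    using ln_growth_pos by (intro power_mono) auto
  ultimately have "(1 + 4/(1 + 2*r)) * ln (1 + r)^2 \<le> 11/3 * (5/12)^2"
    using r_pos by (intro mult_mono) auto
  then show ?thesis
    using \<open>ln (1 + r) \<le> 5/12\<close> by (simp add: power2_eq_square)
qed

lemma envelope_exit_bound: "2/3 * w0 * (1 + r) powr (1 + 4/(1 + 2*r)) \<le> a0"
proof -
  define E lg where "E = 1 + 4/(1 + 2*r)" and "lg = ln (1 + r)"
  have "lg > 0"
    using ln_growth_pos by (simp add: lg_def)
  have "2/5 \<le> ln (3/2::real)"
    using ln_add_one_ge_pade[of "1/2"] by simp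
  then have "lg * (2/5) \<le> lg * ln (3/2)"
    using \<open>lg > 0\<close> by simp
  moreover have "lg * (E*lg + 2 - 2*\<beta>) = E*lg^2 + 2*lg - 2*ln 2"
    using \<open>lg > 0\<close> by (simp add: \<beta>_def lg_def field_simps power2_eq_square)
  ultimately have "lg * (E*lg + 2 - 2*\<beta>) \<le> lg * ln (3/2)"
    using ln_growth_sq_bound ln2_ge_two_thirds unfolding E_def lg_def by linarith
  then have "E*lg + 2 - 2*\<beta> \<le> ln (3/2)"
    using \<open>lg > 0\<close> by simp
  then have "exp (E*lg + 2 - 2*\<beta>) \<le> 3/2"
    by (metis exp_le_cancel_iff exp_ln zero_less_divide_iff zero_less_numeral)
  have "2/3 * w0 * (1 + r) powr E = a0 * (2/3 * exp (E*lg + 2 - 2*\<beta>))"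
    using r_pos by (simp add: w0_def a0_def powr_def lg_def exp_add[symmetric] field_simps)
  also have "\<dots> \<le> a0 * (2/3 * (3/2))"
    using \<open>exp (E*lg + 2 - 2*\<beta>) \<le> 3/2\<close> a0_pos by (intro mult_left_mono) auto
  finally show ?thesis
    by (simp add: E_def)
qed

lemma sigma_pos: "0 < \<sigma>"
  using tau_pos r_pos by (simp add: \<sigma>_def)

lemma half_tau_over_sigma: "(\<tau>/2)/\<sigma> = 4/(1 + 2*r)"
proof -
  have "\<tau> * (1 + 2*r) \<noteq> 0" "1 + 2*r \<noteq> 0"
    using tau_pos r_pos by auto
  then show ?thesis
    unfolding \<sigma>_def by (simp add: field_simps)
qed

lemma envelope_tail_le_a0:
  assumes "e \<le> 1 + 4/(1 + 2*r)"
  shows "2/3 * w0 * (1 + r) powr e \<le> a0"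
proof -
  have "(1 + r) powr e \<le> (1 + r) powr (1 + 4/(1 + 2*r))"
    using assms r_pos by (intro powr_mono) auto
  then have "2/3 * w0 * (1 + r) powr e \<le> 2/3 * w0 * (1 + r) powr (1 + 4/(1 + 2*r))"
    using w0_pos by simp
  then show ?thesis
    using envelope_exit_bound by linarith
qed

lemma envelope_ge: "2/3 * w0 \<le> envelope u"
proof -
  have "1 \<le> (1 + r) powr max 0 ((u - 3*\<tau>/2)/\<sigma>)"
    using r_pos by (intro ge_one_powr_ge_zero) auto
  then show ?thesis
    using w0_pos by (simp add: envelope_def)
qed

lemma envelope_mono:
  assumes "5*\<tau>/4 < u" "u \<le> v"
  shows "envelope u \<le> envelope v"
proof -
  have "(u - 3*\<tau>/2)/\<sigma> \<le> (v - 3*\<tau>/2)/\<sigma>"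
    using assms sigma_pos by (intro divide_right_mono) auto
  then have "(1 + r) powr max 0 ((u - 3*\<tau>/2)/\<sigma>) \<le> (1 + r) powr max 0 ((v - 3*\<tau>/2)/\<sigma>)"
    using r_pos by (intro powr_mono) auto
  then show ?thesis
    using assms w0_pos by (simp add: envelope_def)
qed

lemma envelope_le_a0:
  assumes "\<tau> \<le> u" "u \<le> 2*\<tau>"
  shows "envelope u \<le> a0"
proof (cases "u \<le> 5*\<tau>/4")
  case True
  then show ?thesis
    using w0_le_a0 by (simp add: envelope_def)
next
  case False
  have "(u - 3*\<tau>/2)/\<sigma> \<le> (\<tau>/2)/\<sigma>"
    using assms sigma_pos by (intro divide_right_mono) auto
  then have "max 0 ((u - 3*\<tau>/2)/\<sigma>) \<le> 1 + 4/(1 + 2*r)"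
    using half_tau_over_sigma r_pos by simp
  then show ?thesis
    using False envelope_tail_le_a0 by (simp add: envelope_def)
qed

lemma envelope_growth:
  assumes "3*\<tau>/2 < u" "u + \<sigma> \<le> v"
  shows "(1 + r) * envelope u \<le> envelope v"
proof -
  have "(u - 3*\<tau>/2)/\<sigma> + 1 = (u + \<sigma> - 3*\<tau>/2)/\<sigma>"
    using sigma_pos by (simp add: field_simps)
  also have "\<dots> \<le> (v - 3*\<tau>/2)/\<sigma>"
    using assms sigma_pos by (intro divide_right_mono) auto
  finally have "(1 + r) powr ((u - 3*\<tau>/2)/\<sigma> + 1) \<le> (1 + r) powr ((v - 3*\<tau>/2)/\<sigma>)"
    using r_pos by (intro powr_mono) auto
  have "(1 + r) * envelope u = 2/3 * w0 * (1 + r) powr ((u - 3*\<tau>/2)/\<sigma> + 1)"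
    using assms tau_pos sigma_pos r_pos by (simp add: envelope_def powr_add)
  also have "\<dots> \<le> 2/3 * w0 * (1 + r) powr ((v - 3*\<tau>/2)/\<sigma>)"
    using \<open>(1 + r) powr _ \<le> _\<close> w0_pos by (intro mult_left_mono) auto
  also have "\<dots> = envelope v"
    using assms tau_pos sigma_pos by (simp add: envelope_def)
  finally show ?thesis .
qed

lemma envelope_growth_at_exit:
  assumes "3*\<tau>/2 < u" "u \<le> 2*\<tau>"
  shows "(1 + r) * envelope u \<le> a0"
proof -
  have "(u - 3*\<tau>/2)/\<sigma> \<le> (\<tau>/2)/\<sigma>"
    using assms sigma_pos by (intro divide_right_mono) auto
  then have "(u - 3*\<tau>/2)/\<sigma> + 1 \<le> 1 + 4/(1 + 2*r)"
    using half_tau_over_sigma by simp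
  moreover have "(1 + r) * envelope u = 2/3 * w0 * (1 + r) powr ((u - 3*\<tau>/2)/\<sigma> + 1)"
    using assms tau_pos sigma_pos r_pos by (simp add: envelope_def powr_add)
  ultimately show ?thesis
    using envelope_tail_le_a0 by metis
qed

definition escape_map :: "real \<Rightarrow> real" where
  "escape_map a = (if a > 0 then (1 + r) * a else - a)"

lemma blk_step:
  assumes "k \<noteq> n"
  shows "blk_a k (x - \<eta> *\<^sub>R grad_blk k x) = escape_map (blk_a k x)"
    and "blk_b k (x - \<eta> *\<^sub>R grad_blk k x) = blk_b k x / 2"
  using assms L_pos
  by (auto simp: grad_blk_def blk_a_def blk_b_def escape_map_def side_coeff_def L2c_def r_def field_simps)

lemma final_blk_step:
  shows "blk_a n (x - \<eta> *\<^sub>R grad_blk n x) = blk_a n x / 2"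
    and "blk_b n (x - \<eta> *\<^sub>R grad_blk n x) = blk_b n x / 2"
  using L_pos by (auto simp: grad_blk_def blk_a_def blk_b_def field_simps)

definition tnorm :: "real \<Rightarrow> real" where
  "tnorm u = (u - \<tau>)/\<tau>"

definition drift :: "real \<Rightarrow> real" where
  "drift u = ((1 - 2*r)*(u - \<tau>) + 2*r*\<tau>)/4"

definition bend :: "real \<Rightarrow> real \<Rightarrow> real" where
  "bend u w = (if w > 0 then (1 + 2*r)/4 else -3/4) * smoothstep_deriv (tnorm u) * w^2/\<tau>"

definition w_factor :: "real \<Rightarrow> real \<Rightarrow> real" where
  "w_factor u w = (if w > 0 then 1/2 + (1 + 2*r)/2 * smoothstep (tnorm u)
                   else 1/2 - 3/2 * smoothstep (tnorm u))"

lemma buf_step: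
  shows "buf_u j (x - \<eta> *\<^sub>R grad_buf j x) = buf_u j x + drift (buf_u j x) + bend (buf_u j x) (buf_w j x)"
    and "buf_w j (x - \<eta> *\<^sub>R grad_buf j x) = buf_w j x * w_factor (buf_u j x) (buf_w j x)"
proof -
  have coords: "buf_u j (x - \<eta> *\<^sub>R grad_buf j x) = buf_u j x - \<eta> * grad_buf_u j x"
      "buf_w j (x - \<eta> *\<^sub>R grad_buf j x) = buf_w j x - \<eta> * grad_buf_w j x"
    by (auto simp: grad_buf_def buf_u_def buf_w_def)
  have drift_eq: "- \<eta> * g1_deriv L \<gamma> \<tau> u = drift u" for u
    using L_pos by (simp add: g1_deriv_def drift_def r_def field_simps)
  have bend_eq: "- \<eta> * (hfun_deriv \<tau> L (side_coeff w) u * w^2) = bend u w" for u w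
    using L_pos tau_pos
    by (simp add: hfun_deriv_def bend_def side_coeff_def L2c_def tnorm_def r_def field_simps)
  have factor_eq: "w - \<eta> * (2 * hfun \<tau> L (side_coeff w) u * w) = w * w_factor u w" for u w
    using L_pos tau_pos
    by (simp add: hfun_eq_smoothstep w_factor_def side_coeff_def L2c_def tnorm_def r_def field_simps)
  have "buf_u j x - \<eta> * grad_buf_u j x = buf_u j x + - \<eta> * g1_deriv L \<gamma> \<tau> (buf_u j x)
      + - \<eta> * (hfun_deriv \<tau> L (side_coeff (buf_w j x)) (buf_u j x) * (buf_w j x)^2)"
    by (simp add: grad_buf_u_def algebra_simps)
  then show "buf_u j (x - \<eta> *\<^sub>R grad_buf j x) = buf_u j x + drift (buf_u j x) + bend (buf_u j x) (buf_w j x)"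
    unfolding coords drift_eq bend_eq .
  show "buf_w j (x - \<eta> *\<^sub>R grad_buf j x) = buf_w j x * w_factor (buf_u j x) (buf_w j x)"
    unfolding coords grad_buf_w_def factor_eq ..
qed

text \<open>Where a buffer meets a block, the two formulas have the same gradient; the only exception
  is the entrance of the last block, whose formula is a plain bowl.\<close>

lemma grad_buf_at_entry:
  assumes "buf_u j x = \<tau>" "j \<noteq> n"
  shows "grad_buf j x = grad_blk j x"
proof -
  have "blk_a j x = \<tau>/2"
    using assms buf_u_eq_blk_a[of j x] by simp
  moreover have "grad_buf_u j x = - \<gamma> * \<tau>"
    using assms tau_pos by (simp add: grad_buf_u_def hfun_deriv_left_end g1_deriv_def algebra_simps)
  moreover have "grad_buf_w j x = 2*L*blk_b j x"
    using assms tau_pos by (simp add: grad_buf_w_def hfun_left_end buf_w_eq_blk_b)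
  ultimately show ?thesis
    using assms tau_pos by (simp add: grad_buf_def grad_blk_def side_coeff_def)
qed

lemma grad_buf_at_exit:
  assumes "buf_u j x = 2*\<tau>" "Suc j \<noteq> n"
  shows "grad_buf j x = grad_blk (Suc j) x"
proof -
  have "blk_b (Suc j) x = - \<tau>/2"
    using assms blk_b_Suc[of j x] by simp
  moreover have "grad_buf_u j x = - L * \<tau>"
    unfolding grad_buf_u_def assms(1) hfun_deriv_right_end[OF tau_nonzero]
    by (simp add: g1_deriv_def algebra_simps)
  moreover have "grad_buf_w j x = 2 * side_coeff (blk_a (Suc j) x) * blk_a (Suc j) x"
    using assms by (simp add: grad_buf_w_def hfun_right_end[OF tau_nonzero] blk_a_Suc)
  ultimately show ?thesis
    using assms by (auto simp: grad_buf_def grad_blk_def)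
qed

lemma escape_map_potential: "\<bar>b/2\<bar> * \<bar>escape_map a\<bar> powr \<beta> \<le> \<bar>b\<bar> * \<bar>a\<bar> powr \<beta>"
proof (cases "a > 0")
  case True
  have "\<bar>escape_map a\<bar> powr \<beta> = 2 * \<bar>a\<bar> powr \<beta>"
    using True r_pos by (simp add: escape_map_def abs_mult powr_mult growth_powr_beta)
  then show ?thesis
    by simp
next
  case False
  then show ?thesis
    by (simp add: escape_map_def mult_right_mono)
qed

lemma escape_map_stays:
  assumes "\<bar>a\<bar> \<le> \<tau>/2" "escape_map a \<le> \<tau>/2"
  shows "\<bar>escape_map a\<bar> \<le> \<tau>/2"
  using assms r_pos by (auto simp: escape_map_def)

lemma escape_map_exit:
  assumes "\<bar>a\<bar> \<le> \<tau>/2" "\<bar>b\<bar> * \<bar>a\<bar> powr \<beta> \<le> K" "\<tau>/2 < escape_map a"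
  shows "escape_map a \<le> 3*\<tau>/4" and "\<bar>b/2\<bar> \<le> w0"
proof -
  have "a > 0"
    using assms(1,3) by (auto simp: escape_map_def split: if_splits)
  then have "(1 + r) * a \<le> 3/2 * (\<tau>/2)"
    using assms(1) r_le_half r_pos by (intro mult_mono) auto
  then show "escape_map a \<le> 3*\<tau>/4"
    using \<open>a > 0\<close> by (simp add: escape_map_def)
  have "(\<tau>/2) powr \<beta> \<le> \<bar>escape_map a\<bar> powr \<beta>"
    using assms(3) tau_pos one_le_beta by (intro powr_mono2) auto
  then have "\<bar>b/2\<bar> * (\<tau>/2) powr \<beta> \<le> \<bar>b/2\<bar> * \<bar>escape_map a\<bar> powr \<beta>"
    by (intro mult_left_mono) auto
  also have "\<dots> \<le> w0 * (\<tau>/2) powr \<beta>"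
    using escape_map_potential[of b a] assms(2) K_eq by linarith
  finally show "\<bar>b/2\<bar> \<le> w0"
    using tau_pos by simp
qed

lemma tnorm_bounds:
  assumes "\<tau> \<le> u" "u \<le> 2*\<tau>"
  shows "0 \<le> tnorm u" "tnorm u \<le> 1"
  using assms tau_pos by (simp_all add: tnorm_def field_simps)

lemma drift_bounds:
  assumes "\<tau> \<le> u" "u \<le> 2*\<tau>"
  shows "r*\<tau>/2 \<le> drift u" and "drift u \<le> \<tau>/4" and "3*\<tau>/2 \<le> u \<Longrightarrow> \<sigma> \<le> drift u"
proof -
  have "0 \<le> (1 - 2*r)*(u - \<tau>)"
    using assms r_le_half by simp
  then show "r*\<tau>/2 \<le> drift u"
    by (simp add: drift_def)
  have "(1 - 2*r)*(u - \<tau>) \<le> (1 - 2*r)*\<tau>"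
    using assms r_le_half by (intro mult_left_mono) auto
  then show "drift u \<le> \<tau>/4"
    by (simp add: drift_def algebra_simps)
  assume "3*\<tau>/2 \<le> u"
  then have "(1 - 2*r)*(\<tau>/2) \<le> (1 - 2*r)*(u - \<tau>)"
    using r_le_half by (intro mult_left_mono) auto
  then show "\<sigma> \<le> drift u"
    by (simp add: drift_def \<sigma>_def field_simps)
qed

lemma w_sq_over_tau_le:
  assumes "\<bar>w\<bar> \<le> c"
  shows "w^2/\<tau> \<le> c^2/\<tau>"
  using assms tau_pos power_mono[of "\<bar>w\<bar>" c 2] by (simp add: divide_right_mono)

lemma bend_pos_bounds:
  assumes "\<tau> \<le> u" "u \<le> 2*\<tau>" "w > 0" "\<bar>w\<bar> \<le> \<tau>/2"
  shows "0 \<le> bend u w" and "bend u w \<le> \<tau>/4"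
proof -
  have D: "0 \<le> smoothstep_deriv (tnorm u)" "smoothstep_deriv (tnorm u) \<le> 15/8"
    using smoothstep_deriv_nonneg smoothstep_deriv_le tnorm_bounds[OF assms(1,2)] by auto
  have bend: "bend u w = ((1 + 2*r)/4 * smoothstep_deriv (tnorm u)) * (w^2/\<tau>)"
    using assms(3) by (simp add: bend_def)
  show "0 \<le> bend u w"
    unfolding bend using D r_pos tau_pos by simp
  have "w^2/\<tau> \<le> \<tau>/4"
    using w_sq_over_tau_le[OF assms(4)] tau_pos by (simp add: power2_eq_square)
  then have "((1 + 2*r)/4 * smoothstep_deriv (tnorm u)) * (w^2/\<tau>) \<le> (2/4 * (15/8)) * (\<tau>/4)"
    using D r_pos r_le_half tau_pos by (intro mult_mono) auto
  then show "bend u w \<le> \<tau>/4"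
    unfolding bend using tau_pos by linarith
qed

lemma bend_neg_bounds:
  assumes "\<tau> \<le> u" "u \<le> 2*\<tau>" "w \<le> 0" "\<bar>w\<bar> \<le> w0"
  shows "- (r*\<tau>/2) \<le> bend u w" and "bend u w \<le> 0"
proof -
  have D: "0 \<le> smoothstep_deriv (tnorm u)" "smoothstep_deriv (tnorm u) \<le> 15/8"
    using smoothstep_deriv_nonneg smoothstep_deriv_le tnorm_bounds[OF assms(1,2)] by auto
  have bend: "bend u w = - ((3/4 * smoothstep_deriv (tnorm u)) * (w^2/\<tau>))"
    using assms(3) by (simp add: bend_def)
  show "bend u w \<le> 0"
    unfolding bend using D tau_pos by simp
  have "w^2/\<tau> \<le> w0^2/\<tau>"
    by (rule w_sq_over_tau_le[OF assms(4)])
  also have "\<dots> \<le> (3/32 * r * \<tau>^2)/\<tau>"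
    using w0_sq_le tau_pos by (intro divide_right_mono) auto
  also have "\<dots> = 3/32 * (r * \<tau>)"
    using tau_pos by (simp add: power2_eq_square)
  finally have "(3/4 * smoothstep_deriv (tnorm u)) * (w^2/\<tau>) \<le> (3/4 * (15/8)) * (3/32 * (r * \<tau>))"
    using D tau_pos by (intro mult_mono) auto
  then show "- (r*\<tau>/2) \<le> bend u w"
    unfolding bend using mult_pos_pos[OF r_pos tau_pos] by linarith
qed

lemma w_factor_pos:
  assumes "\<tau> \<le> u" "u \<le> 2*\<tau>" "w > 0"
  shows "0 < w_factor u w" and "w_factor u w \<le> 1 + r"
proof -
  have S: "0 \<le> smoothstep (tnorm u)" "smoothstep (tnorm u) \<le> 1"
    using smoothstep_nonneg smoothstep_le_one tnorm_bounds[OF assms(1,2)] by auto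
  then show "0 < w_factor u w"
    using assms(3) r_pos by (simp add: w_factor_def add_pos_nonneg)
  have "(1 + 2*r)/2 * smoothstep (tnorm u) \<le> (1 + 2*r)/2 * 1"
    using S r_pos by (intro mult_left_mono) auto
  then show "w_factor u w \<le> 1 + r"
    using assms(3) by (simp add: w_factor_def)
qed

lemma w_factor_abs_le_one:
  assumes "\<tau> \<le> u" "u \<le> 2*\<tau>" "w \<le> 0 \<or> u \<le> 3*\<tau>/2"
  shows "\<bar>w_factor u w\<bar> \<le> 1"
proof -
  have S: "0 \<le> smoothstep (tnorm u)" "smoothstep (tnorm u) \<le> 1"
    using smoothstep_nonneg smoothstep_le_one tnorm_bounds[OF assms(1,2)] by auto
  show ?thesis
  proof (cases "w > 0")
    case True
    then have "u \<le> 3*\<tau>/2"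
      using assms(3) by simp
    then have "smoothstep (tnorm u) \<le> 1/2"
      using tau_pos by (intro smoothstep_le_half) (simp add: tnorm_def field_simps)
    then have "(1 + 2*r)/2 * smoothstep (tnorm u) \<le> 1 * (1/2)"
      using S r_pos r_le_half by (intro mult_mono) auto
    then show ?thesis
      using True S r_pos by (simp add: w_factor_def)
  next
    case False
    then show ?thesis
      using S by (simp add: w_factor_def)
  qed
qed

lemma w_factor_abs_early:
  assumes "\<tau> \<le> u" "u \<le> 5*\<tau>/4"
  shows "\<bar>w_factor u w\<bar> \<le> 2/3"
proof -
  define S where "S = smoothstep (tnorm u)"
  have "0 \<le> tnorm u" "tnorm u \<le> 1/4"
    using assms tau_pos by (simp_all add: tnorm_def field_simps)
  then have S: "0 \<le> S" "S \<le> 5/32"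
    unfolding S_def using smoothstep_nonneg smoothstep_le_quarter by auto
  define F where "F = (1 + 2*r)/2 * S"
  have "0 \<le> F" "F \<le> 1 * (5/32)"
    unfolding F_def using S r_pos r_le_half by (intro mult_mono mult_nonneg_nonneg; simp)+
  moreover have "w_factor u w = (if w > 0 then 1/2 + F else 1/2 - 3/2 * S)"
    by (simp add: w_factor_def S_def F_def)
  ultimately show ?thesis
    using S by simp
qed

text \<open>The invariant of the buffer coordinates; the bound \<open>w0\<close> on the negative side keeps \<open>bend\<close>
  from pushing \<open>u\<close> backwards.\<close>

definition buf_ok :: "real \<Rightarrow> real \<Rightarrow> bool" where
  "buf_ok u w \<longleftrightarrow> \<tau> \<le> u \<and> u \<le> 2*\<tau> \<and> (w \<le> 0 \<longrightarrow> \<bar>w\<bar> \<le> w0) \<and> \<bar>w\<bar> \<le> envelope u"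

lemma buf_ok_small:
  assumes "buf_ok u w"
  shows "\<bar>w\<bar> \<le> a0"
  using assms envelope_le_a0 by (force simp: buf_ok_def)

lemma buf_u_increment_bounds:
  assumes "buf_ok u w"
  shows "0 \<le> drift u + bend u w" and "drift u + bend u w \<le> \<tau>/2"
    and "w > 0 \<Longrightarrow> drift u \<le> drift u + bend u w"
proof -
  have u: "\<tau> \<le> u" "u \<le> 2*\<tau>" and neg: "w \<le> 0 \<Longrightarrow> \<bar>w\<bar> \<le> w0"
    using assms by (auto simp: buf_ok_def)
  have small: "\<bar>w\<bar> \<le> \<tau>/2"
    using buf_ok_small[OF assms] a0_less by linarith
  have "0 \<le> r*\<tau>"
    using r_pos tau_pos by simp
  then have bend: "- (r*\<tau>/2) \<le> bend u w" "bend u w \<le> \<tau>/4"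
    using bend_pos_bounds[OF u _ small] bend_neg_bounds[OF u _ neg] tau_pos
    by (cases "w > 0"; force)+
  show "0 \<le> drift u + bend u w" and "drift u + bend u w \<le> \<tau>/2"
    using bend drift_bounds[OF u] by linarith+
  show "w > 0 \<Longrightarrow> drift u \<le> drift u + bend u w"
    using bend_pos_bounds(1)[OF u _ small] by simp
qed

lemma abs_mult_factor_le:
  fixes w f c :: real
  assumes "\<bar>f\<bar> \<le> c"
  shows "\<bar>w * f\<bar> \<le> \<bar>w\<bar> * c"
  unfolding abs_mult using assms by (intro mult_left_mono) auto

lemma buf_w_step_le_envelope:
  assumes "buf_ok u w"
  shows "\<bar>w * w_factor u w\<bar> \<le> envelope (u + drift u + bend u w)"
proof -
  have u: "\<tau> \<le> u" "u \<le> 2*\<tau>" and env: "\<bar>w\<bar> \<le> envelope u"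
    using assms by (auto simp: buf_ok_def)
  note inc = buf_u_increment_bounds[OF assms]
  show ?thesis
  proof (cases "u \<le> 5*\<tau>/4")
    case True
    have "\<bar>w * w_factor u w\<bar> \<le> \<bar>w\<bar> * (2/3)"
      using abs_mult_factor_le w_factor_abs_early[OF u(1) True] by blast
    also have "\<dots> \<le> w0 * (2/3)"
      using env True by (simp add: envelope_def)
    also have "\<dots> \<le> envelope (u + drift u + bend u w)"
      using envelope_ge[of "u + drift u + bend u w"] by linarith
    finally show ?thesis .
  next
    case late: False
    show ?thesis
    proof (cases "w \<le> 0 \<or> u \<le> 3*\<tau>/2")
      case True
      have "\<bar>w * w_factor u w\<bar> \<le> \<bar>w\<bar> * 1"
        using abs_mult_factor_le w_factor_abs_le_one[OF u True] by blast
      also have "\<dots> \<le> envelope u"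
        using env by simp
      also have "\<dots> \<le> envelope (u + drift u + bend u w)"
        using envelope_mono late inc by simp
      finally show ?thesis .
    next
      case False
      then have "w > 0" "3*\<tau>/2 < u"
        by auto
      have "\<bar>w * w_factor u w\<bar> \<le> \<bar>w\<bar> * (1 + r)"
        using w_factor_pos[OF u \<open>w > 0\<close>] by (intro abs_mult_factor_le) simp
      also have "\<dots> \<le> (1 + r) * envelope u"
        using env r_pos by (simp add: mult.commute mult_left_mono)
      also have "\<dots> \<le> envelope (u + drift u + bend u w)"
        using \<open>3*\<tau>/2 < u\<close> drift_bounds(3)[OF u] inc(3)[OF \<open>w > 0\<close>]
        by (intro envelope_growth) auto
      finally show ?thesis .
    qed
  qed
qed

lemma buf_ok_step:
  assumes "buf_ok u w" "u + drift u + bend u w \<le> 2*\<tau>"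
  shows "buf_ok (u + drift u + bend u w) (w * w_factor u w)"
proof -
  have u: "\<tau> \<le> u" "u \<le> 2*\<tau>" and neg: "w \<le> 0 \<Longrightarrow> \<bar>w\<bar> \<le> w0"
    using assms(1) by (auto simp: buf_ok_def)
  have "\<bar>w * w_factor u w\<bar> \<le> w0" if "w * w_factor u w \<le> 0"
  proof -
    have "w \<le> 0"
      using that w_factor_pos(1)[OF u] by (meson mult_pos_pos not_le)
    then have "\<bar>w * w_factor u w\<bar> \<le> \<bar>w\<bar> * 1"
      using abs_mult_factor_le w_factor_abs_le_one[OF u] by blast
    then show ?thesis
      using neg \<open>w \<le> 0\<close> by simp
  qed
  then show ?thesis
    using assms u buf_u_increment_bounds(1)[OF assms(1)] buf_w_step_le_envelope[OF assms(1)]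
    by (simp add: buf_ok_def)
qed

lemma buf_exit_step:
  assumes "buf_ok u w" "2*\<tau> < u + drift u + bend u w"
  shows "u + drift u + bend u w \<le> 5*\<tau>/2" and "\<bar>w * w_factor u w\<bar> \<le> a0"
proof -
  have u: "\<tau> \<le> u" "u \<le> 2*\<tau>" and env: "\<bar>w\<bar> \<le> envelope u"
    using assms(1) by (auto simp: buf_ok_def)
  note inc = buf_u_increment_bounds[OF assms(1)]
  show "u + drift u + bend u w \<le> 5*\<tau>/2"
    using inc u by simp
  show "\<bar>w * w_factor u w\<bar> \<le> a0"
  proof (cases "w > 0")
    case False
    have "\<bar>w_factor u w\<bar> \<le> 1"
      using w_factor_abs_le_one[OF u] False by simp
    then have "\<bar>w * w_factor u w\<bar> \<le> \<bar>w\<bar> * 1"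
      by (rule abs_mult_factor_le)
    then show ?thesis
      using buf_ok_small[OF assms(1)] by simp
  next
    case True
    have "3*\<tau>/2 < u"
      using assms(2) inc(2) by simp
    have "\<bar>w * w_factor u w\<bar> \<le> \<bar>w\<bar> * (1 + r)"
      using w_factor_pos[OF u True] by (intro abs_mult_factor_le) simp
    also have "\<dots> \<le> (1 + r) * envelope u"
      using env r_pos by (simp add: mult.commute mult_left_mono)
    also have "\<dots> \<le> a0"
      using envelope_growth_at_exit \<open>3*\<tau>/2 < u\<close> u by simp
    finally show ?thesis .
  qed
qed

lemma buf_step_at_far_end:
  shows "drift (2*\<tau>) = \<tau>/4" and "bend (2*\<tau>) w = 0" and "\<bar>w_factor (2*\<tau>) w\<bar> \<le> 3/2"
proof -
  have "tnorm (2*\<tau>) = 1"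
    using tau_pos by (simp add: tnorm_def)
  then show "drift (2*\<tau>) = \<tau>/4" "bend (2*\<tau>) w = 0" "\<bar>w_factor (2*\<tau>) w\<bar> \<le> 3/2"
    using r_pos r_le_half by (auto simp: drift_def bend_def w_factor_def algebra_simps)
qed

lemma grad_buf_eq_grad_blk:
  assumes "x \<in> blk \<tau> k" "x \<in> buf \<tau> j" "j < n" "k \<noteq> n"
  shows "grad_buf j x = grad_blk k x"
  using blk_meets_buf[OF assms(1,2)]
proof
  assume "j = k \<and> blk_a k x = \<tau>/2"
  then show ?thesis
    using grad_buf_at_entry[of j x] buf_u_eq_blk_a[of j x] assms(3) by simp
next
  assume "Suc j = k \<and> blk_b k x = - \<tau>/2"
  then show ?thesis
    using grad_buf_at_exit[of j x] blk_b_Suc[of j x] assms(4) by simp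
qed

subsection \<open>The invariant of gradient descent\<close>

definition in_block_inv :: "nat \<Rightarrow> real \<times> real \<Rightarrow> bool" where
  "in_block_inv i x \<longleftrightarrow> 1 \<le> i \<and> i < n \<and> x \<in> blk \<tau> i \<and> \<bar>blk_b i x\<bar> * \<bar>blk_a i x\<bar> powr \<beta> \<le> K"

definition in_buffer_inv :: "nat \<Rightarrow> real \<times> real \<Rightarrow> bool" where
  "in_buffer_inv j x \<longleftrightarrow> 1 \<le> j \<and> j < n \<and> buf_ok (buf_u j x) (buf_w j x)"

text \<open>On the side shared with buffer \<open>n - 1\<close> the buffer's gradient may be taken, which can
  stretch \<open>blk_a n\<close> by \<open>3/2\<close>; the second conjunct leaves room for that.\<close>

definition in_final_inv :: "real \<times> real \<Rightarrow> bool" where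
  "in_final_inv x \<longleftrightarrow> x \<in> blk \<tau> n \<and> (blk_b n x = - \<tau>/2 \<longrightarrow> \<bar>blk_a n x\<bar> \<le> \<tau>/4)"

definition gd_inv :: "real \<times> real \<Rightarrow> bool" where
  "gd_inv x \<longleftrightarrow> (\<exists>i. in_block_inv i x) \<or> (\<exists>j. in_buffer_inv j x) \<or> in_final_inv x"

lemma in_buffer_inv_mem:
  assumes "in_buffer_inv j x"
  shows "x \<in> buf \<tau> j" and "\<bar>buf_w j x\<bar> < \<tau>/2"
proof -
  have "\<bar>buf_w j x\<bar> \<le> a0"
    using assms buf_ok_small unfolding in_buffer_inv_def by blast
  then show "\<bar>buf_w j x\<bar> < \<tau>/2"
    using a0_less by simp
  then show "x \<in> buf \<tau> j"
    using assms by (simp add: in_buffer_inv_def buf_ok_def mem_buf_iff)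
qed

lemma gd_inv_in_region:
  assumes "gd_inv x"
  shows "x \<in> regionD \<tau> n"
proof -
  consider (B) i where "in_block_inv i x" | (Q) j where "in_buffer_inv j x" | (F) "in_final_inv x"
    using assms unfolding gd_inv_def by blast
  then show ?thesis
  proof cases
    case (B i)
    then show ?thesis
      by (auto simp: regionD_def in_block_inv_def)
  next
    case (Q j)
    then have "j \<in> {1..n-1}" "x \<in> buf \<tau> j"
      using in_buffer_inv_mem(1) by (auto simp: in_buffer_inv_def)
    then show ?thesis
      by (auto simp: regionD_def)
  next
    case F
    then show ?thesis
      using two_le_n by (auto simp: regionD_def in_final_inv_def)
  qed
qed

lemma gd_inv_init:
  assumes "x0 \<in> blk \<tau> 1" and "\<bar>fst x0 - \<tau>/2\<bar> \<le> \<tau> / (2 * exp 2)"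
  shows "gd_inv x0"
proof -
  have "\<bar>blk_a 1 x0\<bar> \<le> a0"
    using assms(2) by (simp add: blk_a_def cs1_def a0_def exp_minus field_simps)
  then have "\<bar>blk_a 1 x0\<bar> powr \<beta> \<le> a0 powr \<beta>"
    using one_le_beta by (intro powr_mono2) auto
  moreover have "\<bar>blk_b 1 x0\<bar> \<le> \<tau>/2"
    using assms(1) mem_blk_iff by blast
  ultimately have "\<bar>blk_b 1 x0\<bar> * \<bar>blk_a 1 x0\<bar> powr \<beta> \<le> \<tau>/2 * a0 powr \<beta>"
    by (intro mult_mono) auto
  then have "in_block_inv 1 x0"
    using assms(1) two_le_n by (simp add: in_block_inv_def K_def)
  then show ?thesis
    unfolding gd_inv_def by blast
qed

lemma block_step_inv:
  assumes "in_block_inv i x"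
  shows "gd_inv (x - \<eta> *\<^sub>R grad_blk i x)"
proof -
  define x' where "x' = x - \<eta> *\<^sub>R grad_blk i x"
  have i: "1 \<le> i" "i < n" and a: "\<bar>blk_a i x\<bar> \<le> \<tau>/2" and b: "\<bar>blk_b i x\<bar> \<le> \<tau>/2"
    and pot: "\<bar>blk_b i x\<bar> * \<bar>blk_a i x\<bar> powr \<beta> \<le> K"
    using assms by (auto simp: in_block_inv_def mem_blk_iff)
  have a': "blk_a i x' = escape_map (blk_a i x)" and b': "blk_b i x' = blk_b i x / 2"
    using blk_step i unfolding x'_def by auto
  show ?thesis
  proof (cases "escape_map (blk_a i x) \<le> \<tau>/2")
    case True
    have "\<bar>blk_b i x'\<bar> * \<bar>blk_a i x'\<bar> powr \<beta> \<le> K"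
      using escape_map_potential[of "blk_b i x" "blk_a i x"] pot unfolding a' b' by linarith
    moreover have "\<bar>blk_a i x'\<bar> \<le> \<tau>/2" "\<bar>blk_b i x'\<bar> \<le> \<tau>/2"
      using b a' b' escape_map_stays[OF a True] by auto
    ultimately have "in_block_inv i x'"
      using i unfolding in_block_inv_def mem_blk_iff by blast
    then show ?thesis
      unfolding gd_inv_def x'_def by blast
  next
    case False
    then have "escape_map (blk_a i x) \<le> 3*\<tau>/4" "\<bar>blk_b i x / 2\<bar> \<le> w0"
      using escape_map_exit[OF a pot] by auto
    then have "in_buffer_inv i x'"
      using i False a' b' w0_pos
      by (auto simp: in_buffer_inv_def buf_ok_def buf_u_eq_blk_a buf_w_eq_blk_b envelope_def)
    then show ?thesis
      unfolding gd_inv_def x'_def by blast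
  qed
qed

lemma buffer_step_inv:
  assumes "in_buffer_inv j x"
  shows "gd_inv (x - \<eta> *\<^sub>R grad_buf j x)"
proof -
  define x' u w where "x' = x - \<eta> *\<^sub>R grad_buf j x" and "u = buf_u j x" and "w = buf_w j x"
  have j: "1 \<le> j" "j < n" and ok: "buf_ok u w"
    using assms by (auto simp: in_buffer_inv_def u_def w_def)
  have u': "buf_u j x' = u + drift u + bend u w" and w': "buf_w j x' = w * w_factor u w"
    unfolding x'_def u_def w_def by (rule buf_step)+
  show ?thesis
  proof (cases "u + drift u + bend u w \<le> 2*\<tau>")
    case True
    then have "in_buffer_inv j x'"
      using buf_ok_step[OF ok True] j u' w' by (simp add: in_buffer_inv_def)
    then show ?thesis
      unfolding gd_inv_def x'_def by blast
  next
    case False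
    then have "blk_b (Suc j) x' \<le> 0" "- \<tau>/2 < blk_b (Suc j) x'" "\<bar>blk_a (Suc j) x'\<bar> \<le> a0"
      using buf_exit_step[OF ok] u' w' blk_a_Suc[of j x'] blk_b_Suc[of j x'] by auto
    then have mem: "x' \<in> blk \<tau> (Suc j)"
      using a0_less by (simp add: mem_blk_iff)
    show ?thesis
    proof (cases "Suc j = n")
      case True
      then have "in_final_inv x'"
        using mem \<open>- \<tau>/2 < blk_b (Suc j) x'\<close> by (auto simp: in_final_inv_def)
      then show ?thesis
        unfolding gd_inv_def x'_def by blast
    next
      case False
      have "\<bar>blk_a (Suc j) x'\<bar> powr \<beta> \<le> a0 powr \<beta>"
        using \<open>\<bar>blk_a (Suc j) x'\<bar> \<le> a0\<close> one_le_beta by (intro powr_mono2) auto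
      then have "\<bar>blk_b (Suc j) x'\<bar> * \<bar>blk_a (Suc j) x'\<bar> powr \<beta> \<le> \<tau>/2 * a0 powr \<beta>"
        using mem by (intro mult_mono) (auto simp: mem_blk_iff)
      then have "in_block_inv (Suc j) x'"
        using mem j False by (simp add: in_block_inv_def K_def)
      then show ?thesis
        unfolding gd_inv_def x'_def by blast
    qed
  qed
qed

lemma final_step_inv:
  assumes "in_final_inv x"
  shows "gd_inv (x - \<eta> *\<^sub>R grad_blk n x)"
proof -
  have "\<bar>blk_a n x\<bar> \<le> \<tau>/2" "\<bar>blk_b n x\<bar> \<le> \<tau>/2"
    using assms by (auto simp: in_final_inv_def mem_blk_iff)
  then have "\<bar>blk_a n (x - \<eta> *\<^sub>R grad_blk n x)\<bar> \<le> \<tau>/4"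
    "\<bar>blk_b n (x - \<eta> *\<^sub>R grad_blk n x)\<bar> \<le> \<tau>/4"
    by (simp_all add: final_blk_step)
  then have "in_final_inv (x - \<eta> *\<^sub>R grad_blk n x)"
    using tau_pos by (auto simp: in_final_inv_def mem_blk_iff)
  then show ?thesis
    unfolding gd_inv_def by blast
qed

lemma final_step_inv_buffer_gradient:
  assumes "in_final_inv x" "x \<in> buf \<tau> j" "j < n"
  shows "gd_inv (x - \<eta> *\<^sub>R grad_buf j x)"
proof -
  define x' where "x' = x - \<eta> *\<^sub>R grad_buf j x"
  have "x \<in> blk \<tau> n"
    using assms(1) by (simp add: in_final_inv_def)
  with blk_meets_buf[OF this assms(2)] assms(3)
  have "Suc j = n" and "blk_b n x = - \<tau>/2"
    by auto
  then have "buf_u j x = 2*\<tau>" and "\<bar>buf_w j x\<bar> \<le> \<tau>/4"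
    using assms(1) blk_b_Suc[of j x] blk_a_Suc[of j x] by (auto simp: in_final_inv_def)
  have "buf_u j x' = 9*\<tau>/4"
    using buf_step(1)[of j x] \<open>buf_u j x = 2*\<tau>\<close> buf_step_at_far_end(1,2) unfolding x'_def by simp
  then have b': "blk_b n x' = - \<tau>/4"
    using blk_b_Suc[of j x'] \<open>Suc j = n\<close> by simp
  have "\<bar>blk_a n x'\<bar> = \<bar>buf_w j x * w_factor (2*\<tau>) (buf_w j x)\<bar>"
    using blk_a_Suc[of j x'] buf_step(2)[of j x] \<open>Suc j = n\<close> \<open>buf_u j x = 2*\<tau>\<close>
    unfolding x'_def by simp
  also have "\<dots> \<le> \<bar>buf_w j x\<bar> * (3/2)"
    by (rule abs_mult_factor_le[OF buf_step_at_far_end(3)])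
  also have "\<dots> \<le> \<tau>/4 * (3/2)"
    using \<open>\<bar>buf_w j x\<bar> \<le> \<tau>/4\<close> by simp
  finally have "\<bar>blk_a n x'\<bar> \<le> \<tau>/2"
    using tau_pos by simp
  with b' have "in_final_inv x'"
    using tau_pos by (simp add: in_final_inv_def mem_blk_iff)
  then show ?thesis
    unfolding gd_inv_def x'_def by blast
qed

lemma buffer_inv_in_final_blk:
  assumes "in_buffer_inv j x" "x \<in> blk \<tau> n"
  shows "in_final_inv x"
proof -
  have "blk_b n x = - \<tau>/2 \<Longrightarrow> Suc j = n"
    using blk_meets_buf[OF assms(2) in_buffer_inv_mem(1)[OF assms(1)]] assms(1) tau_pos
    by (auto simp: in_buffer_inv_def)
  then have "blk_b n x = - \<tau>/2 \<Longrightarrow> \<bar>blk_a n x\<bar> \<le> a0"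
    using assms(1) buf_ok_small blk_a_Suc[of j x] by (auto simp: in_buffer_inv_def)
  then show ?thesis
    using assms(2) a0_le_quarter by (auto simp: in_final_inv_def)
qed

lemma grad_field_at:
  assumes "is_grad_field L \<gamma> \<tau> n G" "x \<in> regionD \<tau> n"
  obtains (blk) k where "k \<le> n" "x \<in> blk \<tau> k" "G x = grad_blk k x"
    | (buf) j where "j < n" "x \<in> buf \<tau> j" "G x = grad_buf j x"
proof -
  from assms consider
      (b) k where "k \<in> {1..n}" "x \<in> blk \<tau> k"
        "(fblk L \<gamma> \<tau> n k has_derivative (\<lambda>h. G x \<bullet> h)) (at x within blk \<tau> k)"
    | (p) j where "j \<in> {1..n-1}" "x \<in> buf \<tau> j"
        "(fbuf L \<gamma> \<tau> j has_derivative (\<lambda>h. G x \<bullet> h)) (at x within buf \<tau> j)"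
    unfolding is_grad_field_def by blast
  then show thesis
  proof cases
    case (b k)
    then have "k \<le> n"
      by simp
    then show thesis
      by (rule blk[OF _ b(2) gradient_within_blk[OF b(2,3)]])
  next
    case (p j)
    then have "j < n"
      using two_le_n by auto
    then show thesis
      by (rule buf[OF _ p(2) gradient_within_buf[OF p(2,3)]])
  qed
qed

lemma gd_inv_step:
  assumes "is_grad_field L \<gamma> \<tau> n G" and "gd_inv x"
  shows "gd_inv (x - \<eta> *\<^sub>R G x)"
proof -
  have inv: "(\<exists>i. in_block_inv i x) \<or> (\<exists>j. in_buffer_inv j x) \<or> in_final_inv x"
    using assms(2) unfolding gd_inv_def .
  from assms(1) gd_inv_in_region[OF assms(2)] show ?thesis
  proof (cases rule: grad_field_at)
    case (blk k)
    from inv show ?thesis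
    proof (elim disjE exE)
      fix i assume B: "in_block_inv i x"
      then have "i = k"
        using mem_blk_unique blk(2) unfolding in_block_inv_def by blast
      then show ?thesis
        using block_step_inv[OF B] blk(3) by simp
    next
      fix j assume Q: "in_buffer_inv j x"
      show ?thesis
      proof (cases "k = n")
        case True
        then show ?thesis
          using final_step_inv[OF buffer_inv_in_final_blk[OF Q]] blk(2,3) by simp
      next
        case False
        have "j < n"
          using Q unfolding in_buffer_inv_def by blast
        then have "grad_buf j x = grad_blk k x"
          using grad_buf_eq_grad_blk[OF blk(2) in_buffer_inv_mem(1)[OF Q] _ False] by blast
        then show ?thesis
          using buffer_step_inv[OF Q] blk(3) by simp
      qed
    next
      assume F: "in_final_inv x"
      then have "n = k"
        using mem_blk_unique blk(2) unfolding in_final_inv_def by blast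
      then show ?thesis
        using final_step_inv[OF F] blk(3) by simp
    qed
  next
    case (buf j)
    from inv show ?thesis
    proof (elim disjE exE)
      fix i assume B: "in_block_inv i x"
      then have "x \<in> blk \<tau> i" "i \<noteq> n"
        unfolding in_block_inv_def by auto
      then have "grad_buf j x = grad_blk i x"
        using grad_buf_eq_grad_blk buf(1,2) by blast
      then show ?thesis
        using block_step_inv[OF B] buf(3) by simp
    next
      fix j' assume Q: "in_buffer_inv j' x"
      then have "j' = j"
        using mem_buf_unique in_buffer_inv_mem[OF Q] buf(2) by blast
      then show ?thesis
        using buffer_step_inv[OF Q] buf(3) by simp
    next
      assume F: "in_final_inv x"
      show ?thesis
        using final_step_inv_buffer_gradient[OF F buf(2,1)] buf(3) by simp
    qed
  qed
qed

end

theorem mainTheorem3: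
  fixes L \<gamma> \<tau> :: real and n :: nat
    and G :: "real \<times> real \<Rightarrow> real \<times> real" and x0 :: "real \<times> real"
  assumes "0 < \<gamma>" and "\<gamma> \<le> L" and "0 < \<tau>" and "2 \<le> n"
    and "is_grad_field L \<gamma> \<tau> n G"
    and "x0 \<in> blk \<tau> 1"
    and "\<bar>fst x0 - \<tau>/2\<bar> \<le> \<tau> / (2 * exp 2)"
  shows "\<forall>t. gd_iter (1 / (4 * L)) G x0 t \<in> regionD \<tau> n"
proof -
  interpret gd_construction L \<gamma> \<tau> n
    using assms(1-4) by unfold_locales
  have "gd_inv (gd_iter \<eta> G x0 t)" for t
  proof (induction t)
    case 0
    then show ?case
      using gd_inv_init[OF assms(6,7)] by (simp add: gd_iter_def)
  next
    case (Suc t)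
    then show ?case
      using gd_inv_step[OF assms(5)] by (simp add: gd_iter_def)
  qed
  then show ?thesis
    using gd_inv_in_region by blast
qed

end
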